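(* In the discrete-time load balancing system described in the context (with parameter $\epsilon>0$ and any Markovian policy), $Q_n^{(\epsilon)}(t+1)U_n^{(\epsilon)}(t)=0$ for all $n\in\{1,\dots,N\}$ and $t\ge0$. Moreover, if the chain $\{\mathbf{Q}(t)\}$ is positive recurrent and its stationary distribution has a finite first moment, then $$\mathbb{E}\big[\|\overline{\mathbf{U}}^{(\epsilon)}\|_1^2\big]\le c_1\epsilon\qquad\text{and}\qquad \mathbb{E}\big[\|\overline{\mathbf{U}}^{(\epsilon)}\|_r^r\big]\le c_r\epsilon\quad (r\in(1,\infty)),$$ where the constants $c_1,c_r$ depend only on $N$, $S_{\max}$ and $r$, not on $\epsilon$.
   Context: Model: a discrete-time system with one dispatcher and $N$ servers; server $n$ has an infinite-buffer FIFO queue of length $Q_n(t)$ at the beginning of slot $t$. Arrivals $A_\Sigma(t)$: integer valued, i.i.d. over $t$, $A_\Sigma(t)\le A_{\max}<\infty$. Service $S_n(t)$: integer valued, i.i.d. over $t$, independent across servers and of arrivals, $S_n(t)\le S_{\max}<\infty$, mean $\mu_n$; $\mu_\Sigma=\sum_n\mu_n$. In each slot the arrivals are routed to one queue by a rule depending only on $\mathbf{Q}(t)$; $A_n(t)$ is the number routed to queue $n$. Dynamics: $Q_n(t+1)=Q_n(t)+A_n(t)-S_n(t)+U_n(t)$ with unused service $U_n(t)=\max\{S_n(t)-Q_n(t)-A_n(t),0\}$. In the system with parameter $\epsilon>0$ the arrival mean is $\mu_\Sigma-\epsilon$, and superscript $(\epsilon)$ marks its quantities. $\overline{\mathbf{U}}^{(\epsilon)}$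 denotes the unused-service vector $\mathbf{U}(t)$ when $\mathbf{Q}(t)$ is distributed according to the stationary distribution. $\|\mathbf{x}\|_r=(\sum_n|x_n|^r)^{1/r}$. *)

theory Defs
  imports "HOL-Probability.Probability"
begin

text \<open>Servers are indexed by 0..N-1. A queue-length vector is a function nat => nat
 (components with index >= N are irrelevant / zero).  In one slot: the total arrival
 a (drawn from arr), the chosen queue k (drawn from route q, depending only on the
 current state q), and the service vector s (independent components S n) are drawn
 independently.\<close>

definition routed :: "nat \<Rightarrow> nat \<Rightarrow> nat \<Rightarrow> nat" where
  "routed a k n = (if n = k then a else 0)"

text \<open>Unused service U_n = max(S_n - Q_n - A_n, 0) (truncated nat subtraction).\<close>
definition unused :: "(nat \<Rightarrow> nat) \<Rightarrow> nat \<Rightarrow> nat \<Rightarrow> (nat \<Rightarrow> nat) \<Rightarrow> nat \<Rightarrow> nat" where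
  "unused q a k s n = s n - (q n + routed a k n)"

definition next_state :: "nat \<Rightarrow> (nat \<Rightarrow> nat) \<Rightarrow> nat \<Rightarrow> nat \<Rightarrow> (nat \<Rightarrow> nat) \<Rightarrow> nat \<Rightarrow> nat" where
  "next_state N q a k s n =
     (if n < N then (q n + routed a k n + unused q a k s n) - s n else 0)"

definition service_vec :: "nat \<Rightarrow> (nat \<Rightarrow> nat pmf) \<Rightarrow> (nat \<Rightarrow> nat) pmf" where
  "service_vec N S = Pi_pmf {..<N} 0 S"

definition step :: "nat \<Rightarrow> nat pmf \<Rightarrow> (nat \<Rightarrow> nat pmf) \<Rightarrow> ((nat \<Rightarrow> nat) \<Rightarrow> nat pmf)
    \<Rightarrow> (nat \<Rightarrow> nat) \<Rightarrow> (nat \<Rightarrow> nat) pmf" where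
  "step N arr S route q =
     bind_pmf arr (\<lambda>a. bind_pmf (route q) (\<lambda>k. bind_pmf (service_vec N S) (\<lambda>s.
       return_pmf (next_state N q a k s))))"

definition unused_dist :: "nat \<Rightarrow> nat pmf \<Rightarrow> (nat \<Rightarrow> nat pmf) \<Rightarrow> ((nat \<Rightarrow> nat) \<Rightarrow> nat pmf)
    \<Rightarrow> (nat \<Rightarrow> nat) pmf \<Rightarrow> (nat \<Rightarrow> nat) pmf" where
  "unused_dist N arr S route \<pi> =
     bind_pmf \<pi> (\<lambda>q. bind_pmf arr (\<lambda>a. bind_pmf (route q) (\<lambda>k. bind_pmf (service_vec N S) (\<lambda>s.
       return_pmf (unused q a k s)))))"

definition stationary :: "((nat \<Rightarrow> nat) \<Rightarrow> (nat \<Rightarrow> nat) pmf) \<Rightarrow> (nat \<Rightarrow> nat) pmf \<Rightarrow> bool" where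
  "stationary K \<pi> \<longleftrightarrow> bind_pmf \<pi> K = \<pi>"

end

theory Submission
  imports Defs
begin

text \<open>Summing the dynamics over the servers gives the conservation law
  sum Q_n(t+1) + sum S_n(t) = sum Q_n(t) + A(t) + sum U_n(t) in every slot.  In stationarity,
  and because the first moment is finite, the queue terms cancel in expectation, so
  E ||U||_1 = E sum S_n - E A = epsilon.  Since 0 <= U_n <= S_n <= S_max, both
  ||U||_1^2 <= N S_max ||U||_1 and U_n^r <= S_max^(r-1) U_n hold pointwise, which gives
  c_1 = N S_max and c_r = S_max^(r-1).\<close>

lemma next_state_mult_unused: "n < N \<Longrightarrow> next_state N q a k s n * unused q a k s n = 0"
  by (auto simp: next_state_def unused_def)

lemma next_state_add_service:
  "n < N \<Longrightarrow> next_state N q a k s n + s n = q n + routed a k n + unused q a k s n"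
  by (auto simp: next_state_def unused_def)

lemma sum_routed: "k < N \<Longrightarrow> (\<Sum>n<N. routed a k n) = a"
  by (simp add: routed_def)

lemma sum_next_state_add_service:
  assumes "k < N"
  shows "(\<Sum>n<N. next_state N q a k s n) + (\<Sum>n<N. s n)
       = (\<Sum>n<N. q n) + a + (\<Sum>n<N. unused q a k s n)"
proof -
  have "(\<Sum>n<N. next_state N q a k s n) + (\<Sum>n<N. s n)
      = (\<Sum>n<N. q n + routed a k n + unused q a k s n)"
    by (simp add: next_state_add_service flip: sum.distrib)
  also have "\<dots> = (\<Sum>n<N. q n) + a + (\<Sum>n<N. unused q a k s n)"
    using assms by (simp add: sum.distrib sum_routed)
  finally show ?thesis .
qed

lemma map_component_service_vec:
  "map_pmf (\<lambda>s. s n) (service_vec N S) = (if n < N then S n else return_pmf 0)"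
  by (simp add: service_vec_def Pi_pmf_component)

lemma expectation_sum_service_vec:
  fixes S :: "nat \<Rightarrow> nat pmf"
  assumes "\<And>n. n < N \<Longrightarrow> integrable (S n) real"
  shows "integrable (service_vec N S) (\<lambda>s. \<Sum>n<N. real (s n))"
    and "measure_pmf.expectation (service_vec N S) (\<lambda>s. \<Sum>n<N. real (s n))
         = (\<Sum>n<N. measure_pmf.expectation (S n) real)"
proof -
  have component: "integrable (service_vec N S) (\<lambda>s. real (s n))"
    "measure_pmf.expectation (service_vec N S) (\<lambda>s. real (s n))
       = measure_pmf.expectation (S n) real"
    if "n < N" for n
    using assms[OF that] map_component_service_vec[of n N S] that
    by (metis integrable_map_pmf_eq integral_map_pmf)+
  then show "integrable (service_vec N S) (\<lambda>s. \<Sum>n<N. real (s n))"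
    by auto
  from component show "measure_pmf.expectation (service_vec N S) (\<lambda>s. \<Sum>n<N. real (s n))
         = (\<Sum>n<N. measure_pmf.expectation (S n) real)"
    by (simp add: Bochner_Integration.integral_sum)
qed

definition slot_dist :: "nat \<Rightarrow> nat pmf \<Rightarrow> (nat \<Rightarrow> nat pmf) \<Rightarrow> ((nat \<Rightarrow> nat) \<Rightarrow> nat pmf)
    \<Rightarrow> (nat \<Rightarrow> nat) pmf \<Rightarrow> ((nat \<Rightarrow> nat) \<times> nat \<times> nat \<times> (nat \<Rightarrow> nat)) pmf" where
  "slot_dist N arr S route \<pi> =
     bind_pmf \<pi> (\<lambda>q. bind_pmf arr (\<lambda>a. bind_pmf (route q) (\<lambda>k.
       map_pmf (\<lambda>s. (q, a, k, s)) (service_vec N S))))"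

lemma unused_dist_eq_map_slot_dist:
  "unused_dist N arr S route \<pi> =
     map_pmf (\<lambda>(q, a, k, s). unused q a k s) (slot_dist N arr S route \<pi>)"
  by (simp add: unused_dist_def slot_dist_def map_bind_pmf pmf.map_comp o_def flip: map_pmf_def)

lemma stationary_iff_map_slot_dist:
  "stationary (step N arr S route) \<pi> \<longleftrightarrow>
     map_pmf (\<lambda>(q, a, k, s). next_state N q a k s) (slot_dist N arr S route \<pi>) = \<pi>"
  by (simp add: stationary_def step_def[abs_def] slot_dist_def map_bind_pmf pmf.map_comp o_def
      flip: map_pmf_def)

lemma map_queue_slot_dist: "map_pmf fst (slot_dist N arr S route \<pi>) = \<pi>"
  by (simp add: slot_dist_def map_bind_pmf pmf.map_comp o_def bind_return_pmf')

lemma map_arrival_slot_dist: "map_pmf (fst \<circ> snd) (slot_dist N arr S route \<pi>) = arr"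
  by (simp add: slot_dist_def map_bind_pmf pmf.map_comp o_def bind_return_pmf')

lemma map_service_slot_dist:
  "map_pmf (snd \<circ> snd \<circ> snd) (slot_dist N arr S route \<pi>) = service_vec N S"
  by (simp add: slot_dist_def map_bind_pmf pmf.map_comp o_def bind_return_pmf')

lemma set_slot_dist:
  "(q, a, k, s) \<in> set_pmf (slot_dist N arr S route \<pi>) \<Longrightarrow>
     k \<in> set_pmf (route q) \<and> s \<in> set_pmf (service_vec N S)"
  by (auto simp: slot_dist_def)

lemma set_unused_dist_subset:
  assumes "\<And>n. n < N \<Longrightarrow> set_pmf (S n) \<subseteq> {..Smax}"
  shows "set_pmf (unused_dist N arr S route \<pi>) \<subseteq> PiE_dflt {..<N} 0 (\<lambda>_. {..Smax})"
proof
  fix u assume "u \<in> set_pmf (unused_dist N arr S route \<pi>)"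
  then obtain q a k s where slot: "(q, a, k, s) \<in> set_pmf (slot_dist N arr S route \<pi>)"
    and u: "u = unused q a k s"
    by (auto simp: unused_dist_eq_map_slot_dist)
  have "s \<in> set_pmf (service_vec N S)"
    using set_slot_dist[OF slot] ..
  then have s_range: "s n \<in> set_pmf (if n < N then S n else return_pmf 0)" for n
    by (auto simp flip: map_component_service_vec)
  have u_le: "u n \<le> s n" for n
    by (simp add: u unused_def)
  have "u n \<le> Smax" if "n < N" for n
    using s_range[of n] assms[OF that] that by (auto intro: order_trans[OF u_le])
  moreover have "u n = 0" if "\<not> n < N" for n
    using s_range[of n] u_le[of n] that by simp
  ultimately show "u \<in> PiE_dflt {..<N} 0 (\<lambda>_. {..Smax})"
    by (auto simp: PiE_dflt_def)
qed

lemma expectation_sum_unused: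
  fixes arr :: "nat pmf" and S :: "nat \<Rightarrow> nat pmf" and \<pi> :: "(nat \<Rightarrow> nat) pmf"
  assumes route: "\<And>q. set_pmf (route q) \<subseteq> {..<N}"
    and arr: "integrable arr real"
    and service: "\<And>n. n < N \<Longrightarrow> integrable (S n) real"
    and stationary: "stationary (step N arr S route) \<pi>"
    and queue: "integrable \<pi> (\<lambda>q. \<Sum>n<N. real (q n))"
  shows "measure_pmf.expectation (unused_dist N arr S route \<pi>) (\<lambda>u. \<Sum>n<N. real (u n))
       = (\<Sum>n<N. measure_pmf.expectation (S n) real) - measure_pmf.expectation arr real"
proof -
  define J where "J = slot_dist N arr S route \<pi>"
  define total :: "(nat \<Rightarrow> nat) \<Rightarrow> real" where "total v = (\<Sum>n<N. real (v n))" for v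
  define next_queue where "next_queue = (\<lambda>(q, a, k, s). next_state N q a k s)"
  define used where "used = (\<lambda>(q, a, k, s). unused q a k s)"
  have marginals: "map_pmf fst J = \<pi>" "map_pmf next_queue J = \<pi>"
      "map_pmf (fst \<circ> snd) J = arr" "map_pmf (snd \<circ> snd \<circ> snd) J = service_vec N S"
    using stationary
    by (simp_all add: J_def next_queue_def map_queue_slot_dist map_arrival_slot_dist
        map_service_slot_dist stationary_iff_map_slot_dist)
  have balance: "total (next_queue x) + total (snd (snd (snd x)))
      = total (fst x) + real (fst (snd x)) + total (used x)" if "x \<in> set_pmf J" for x
  proof -
    obtain q a k s where x: "x = (q, a, k, s)"
      by (cases x) auto
    then have "k < N"
      using that route set_slot_dist unfolding J_def by blast
    then show ?thesis
      using arg_cong[where f = real, OF sum_next_state_add_service[of k N q a s]]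
      by (simp add: x total_def next_queue_def used_def flip: of_nat_sum)
  qed
  have integrable_marginal: "integrable J (\<lambda>x. g (f x))"
    if "map_pmf f J = P" "integrable P g" for f and P :: "'b pmf" and g :: "'b \<Rightarrow> real"
    using that by auto
  have integrable: "integrable J (\<lambda>x. total (fst x))" "integrable J (\<lambda>x. total (next_queue x))"
      "integrable J (\<lambda>x. real (fst (snd x)))" "integrable J (\<lambda>x. total (snd (snd (snd x))))"
    using integrable_marginal[OF marginals(1)] integrable_marginal[OF marginals(2)]
      integrable_marginal[OF marginals(3)] integrable_marginal[OF marginals(4)]
      queue arr expectation_sum_service_vec(1)[of N S, OF service]
    by (simp_all add: total_def)
  have "measure_pmf.expectation (unused_dist N arr S route \<pi>) total
      = measure_pmf.expectation J (\<lambda>x. total (used x))"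
    by (simp add: J_def used_def unused_dist_eq_map_slot_dist)
  also have "\<dots> = measure_pmf.expectation J (\<lambda>x. total (next_queue x) - total (fst x)
      + (total (snd (snd (snd x))) - real (fst (snd x))))"
    using balance by (intro integral_cong_AE) (auto simp: AE_measure_pmf_iff algebra_simps)
  also have "\<dots> = measure_pmf.expectation (service_vec N S) total - measure_pmf.expectation arr real"
    using integrable marginals
      integral_map_pmf[of next_queue J total] integral_map_pmf[of fst J total]
    by (simp flip: marginals(3,4))
  finally show ?thesis
    by (simp add: total_def[abs_def] expectation_sum_service_vec(2)[of N S, OF service])
qed

lemma sum_square_le_bound_mult_sum:
  fixes x :: "nat \<Rightarrow> real"
  assumes "\<And>n. n < N \<Longrightarrow> 0 \<le> x n \<and> x n \<le> b"
  shows "(\<Sum>n<N. x n)^2 \<le> real N * b * (\<Sum>n<N. x n)"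
proof -
  have "(\<Sum>n<N. x n) \<le> real N * b"
    using sum_mono[of "{..<N}" x "\<lambda>_. b"] assms by simp
  moreover have "0 \<le> (\<Sum>n<N. x n)"
    using assms by (intro sum_nonneg) auto
  ultimately show ?thesis
    by (simp add: power2_eq_square mult_right_mono)
qed

lemma powr_le_powr_minus_one_mult:
  fixes x b r :: real
  assumes "0 \<le> x" "x \<le> b" "1 \<le> r"
  shows "x powr r \<le> b powr (r - 1) * x"
proof (cases "x = 0")
  case False
  then have "x powr r = x powr (r - 1) * x"
    using assms(1) by (simp add: powr_diff)
  also have "\<dots> \<le> b powr (r - 1) * x"
    using assms by (intro mult_right_mono powr_mono2) auto
  finally show ?thesis .
qed simp

lemma expectation_le_mult_expectation:
  fixes f g :: "'a \<Rightarrow> real"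
  assumes "finite (set_pmf M)" "\<And>x. x \<in> set_pmf M \<Longrightarrow> f x \<le> c * g x"
  shows "measure_pmf.expectation M f \<le> c * measure_pmf.expectation M g"
proof -
  have "measure_pmf.expectation M f \<le> measure_pmf.expectation M (\<lambda>x. c * g x)"
    using assms by (intro integral_mono_AE integrable_measure_pmf_finite)
      (auto simp: AE_measure_pmf_iff)
  then show ?thesis
    by simp
qed

theorem lemma2:
  "\<exists>(c1 :: nat \<Rightarrow> nat \<Rightarrow> real) (cr :: nat \<Rightarrow> nat \<Rightarrow> real \<Rightarrow> real).
     \<forall>(N :: nat) (Amax :: nat) (Smax :: nat) (arr :: nat pmf) (S :: nat \<Rightarrow> nat pmf)
       (route :: (nat \<Rightarrow> nat) \<Rightarrow> nat pmf) (\<epsilon> :: real).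
       N \<ge> 1 \<longrightarrow> \<epsilon> > 0 \<longrightarrow>
       set_pmf arr \<subseteq> {..Amax} \<longrightarrow>
       (\<forall>n<N. set_pmf (S n) \<subseteq> {..Smax}) \<longrightarrow>
       (\<forall>q. set_pmf (route q) \<subseteq> {..<N}) \<longrightarrow>
       measure_pmf.expectation arr real
         = (\<Sum>n<N. measure_pmf.expectation (S n) real) - \<epsilon> \<longrightarrow>
       (\<forall>q a k s n. n < N \<longrightarrow> next_state N q a k s n * unused q a k s n = 0) \<and>
       (\<forall>\<pi>. stationary (step N arr S route) \<pi> \<longrightarrow>
          integrable (measure_pmf \<pi>) (\<lambda>q. \<Sum>n<N. real (q n)) \<longrightarrow>
          measure_pmf.expectation (unused_dist N arr S route \<pi>)
              (\<lambda>u. (\<Sum>n<N. real (u n))^2) \<le> c1 N Smax * \<epsilon> \<and>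
          (\<forall>r::real. r > 1 \<longrightarrow>
             measure_pmf.expectation (unused_dist N arr S route \<pi>)
              (\<lambda>u. \<Sum>n<N. real (u n) powr r) \<le> cr N Smax r * \<epsilon>))"
proof (intro exI[of _ "\<lambda>N Smax. real N * real Smax"]
    exI[of _ "\<lambda>N Smax r. real Smax powr (r - 1)"] allI impI conjI)
  fix N Amax Smax :: nat and arr :: "nat pmf" and S :: "nat \<Rightarrow> nat pmf"
    and route :: "(nat \<Rightarrow> nat) \<Rightarrow> nat pmf" and \<epsilon> :: real and \<pi> :: "(nat \<Rightarrow> nat) pmf"
  assume arr: "set_pmf arr \<subseteq> {..Amax}"
    and service: "\<forall>n<N. set_pmf (S n) \<subseteq> {..Smax}"
    and route: "\<forall>q. set_pmf (route q) \<subseteq> {..<N}"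
    and mean: "measure_pmf.expectation arr real
      = (\<Sum>n<N. measure_pmf.expectation (S n) real) - \<epsilon>"
    and stationary: "stationary (step N arr S route) \<pi>"
    and queue: "integrable (measure_pmf \<pi>) (\<lambda>q. \<Sum>n<N. real (q n))"
  define U where "U = unused_dist N arr S route \<pi>"
  have "integrable arr real" "\<And>n. n < N \<Longrightarrow> integrable (S n) real"
    using arr service by (auto intro!: integrable_measure_pmf_finite intro: finite_subset)
  with route mean stationary queue
  have mean_unused: "measure_pmf.expectation U (\<lambda>u. \<Sum>n<N. real (u n)) = \<epsilon>"
    unfolding U_def by (subst expectation_sum_unused) auto
  have support: "set_pmf U \<subseteq> PiE_dflt {..<N} 0 (\<lambda>_. {..Smax})"
    unfolding U_def using service by (intro set_unused_dist_subset) auto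
  then have finite: "finite (set_pmf U)"
    by (rule finite_subset) auto
  have bounded: "\<And>u n. u \<in> set_pmf U \<Longrightarrow> n < N \<Longrightarrow> real (u n) \<le> real Smax"
    using support by (auto simp: PiE_dflt_def)
  have "measure_pmf.expectation U (\<lambda>u. (\<Sum>n<N. real (u n))^2)
      \<le> real N * real Smax * measure_pmf.expectation U (\<lambda>u. \<Sum>n<N. real (u n))"
    using bounded
    by (intro expectation_le_mult_expectation[OF finite] sum_square_le_bound_mult_sum) auto
  then show "measure_pmf.expectation U (\<lambda>u. (\<Sum>n<N. real (u n))^2)
      \<le> real N * real Smax * \<epsilon>"
    by (simp add: mean_unused)
  fix r :: real
  assume "r > 1"
  have "measure_pmf.expectation U (\<lambda>u. \<Sum>n<N. real (u n) powr r)
      \<le> real Smax powr (r - 1) * measure_pmf.expectation U (\<lambda>u. \<Sum>n<N. real (u n))"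
    using \<open>r > 1\<close> bounded
    by (intro expectation_le_mult_expectation[OF finite])
      (auto simp: sum_distrib_left intro!: sum_mono powr_le_powr_minus_one_mult)
  then show "measure_pmf.expectation U (\<lambda>u. \<Sum>n<N. real (u n) powr r)
      \<le> real Smax powr (r - 1) * \<epsilon>"
    by (simp add: mean_unused)
qed (simp add: next_state_mult_unused)

end
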